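(* Let $\omega\in\Omega_+$ satisfy \[\liminf_{i\to\infty}\frac1i\sum_{y=-i}^{0}(2\omega(y,1)-1)>0.\] Then for all $x,k\in\mathbb Z$ with $k\ge x$, $E_{x,\omega}[D_{T_k}]=k-x$.
   Context: Cookie environments: $\Omega_+=([1/2,1]^{\mathbb N})^{\mathbb Z}$, $\omega=(\omega(z,i))_{z\in\mathbb Z,i\ge1}$. $P_{x,\omega}$ is the law of the nearest-neighbor process $(X_n)_{n\ge0}$ with $X_0=x$ which, on its $i$-th visit to site $z$, jumps to $z+1$ with probability $\omega(z,i)$ and to $z-1$ otherwise (independently of everything else given the history); $E_{x,\omega}$ its expectation. $T_k=\inf\{n\ge0:X_n=k\}$. For a site $z$ and time $n$, $D_n^z=\sum_{i=1}^{\#\{m<n: X_m=z\}}(2\omega(z,i)-1)$ (drift of cookies eaten at $z$ before time $n$); $D_n^+=\sum_{z\ge0}D_n^z$, $D_n^-=\sum_{z<0}D_n^z$, $D_n=D_n^++D_n^-$. *)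

theory Defs
  imports "HOL-Probability.Probability"
begin

text \<open>A cookie environment: omega z i is the cookie strength of the i-th cookie
  at site z (only i \<ge> 1 is relevant).\<close>
type_synonym env = "int \<Rightarrow> nat \<Rightarrow> real"

definition Omega_plus :: "env set" where
  "Omega_plus = {\<omega>. \<forall>z i. i \<ge> 1 \<longrightarrow> 1/2 \<le> \<omega> z i \<and> \<omega> z i \<le> 1}"

text \<open>Canonical construction of the excited random walk from i.i.d. uniform
  variables u 0, u 1, ...: the history [X_0, ..., X_n].\<close>
fun hist :: "env \<Rightarrow> int \<Rightarrow> (nat \<Rightarrow> real) \<Rightarrow> nat \<Rightarrow> int list" where
  "hist \<omega> x u 0 = [x]"
| "hist \<omega> x u (Suc n) =
     (let h = hist \<omega> x u n; z = last h; i = count_list h z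
      in h @ [if u n < \<omega> z i then z + 1 else z - 1])"

definition walk :: "env \<Rightarrow> int \<Rightarrow> (nat \<Rightarrow> real) \<Rightarrow> nat \<Rightarrow> int" where
  "walk \<omega> x u n = last (hist \<omega> x u n)"

definition unif_seq :: "(nat \<Rightarrow> real) measure" where
  "unif_seq = PiM UNIV (\<lambda>_. uniform_measure lborel {0..1})"

definition Dz :: "env \<Rightarrow> int \<Rightarrow> (nat \<Rightarrow> real) \<Rightarrow> nat \<Rightarrow> int \<Rightarrow> real" where
  "Dz \<omega> x u n z = (\<Sum>i\<in>{1..card {m. m < n \<and> walk \<omega> x u m = z}}. 2 * \<omega> z i - 1)"

definition D :: "env \<Rightarrow> int \<Rightarrow> (nat \<Rightarrow> real) \<Rightarrow> nat \<Rightarrow> real" where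
  "D \<omega> x u n = (\<Sum>z\<in>walk \<omega> x u ` {..<n}. Dz \<omega> x u n z)"

definition hit :: "env \<Rightarrow> int \<Rightarrow> (nat \<Rightarrow> real) \<Rightarrow> int \<Rightarrow> enat" where
  "hit \<omega> x u k = (if \<exists>n. walk \<omega> x u n = k then enat (LEAST n. walk \<omega> x u n = k) else \<infinity>)"

text \<open>D_{T_k}; on the (null) event T_k = infinity we use the limit of D_n.\<close>
definition D_at_hit :: "env \<Rightarrow> int \<Rightarrow> (nat \<Rightarrow> real) \<Rightarrow> int \<Rightarrow> ennreal" where
  "D_at_hit \<omega> x u k = (case hit \<omega> x u k of
       enat n \<Rightarrow> ennreal (D \<omega> x u n)
     | \<infinity> \<Rightarrow> (SUP n. ennreal (D \<omega> x u n)))"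

end

theory Submission
  imports Defs "HOL-Library.Sublist"
begin

text \<open>Let \<open>T\<close> be the hitting time of \<open>k\<close>. Each step of the walk has conditional mean \<open>2 p - 1\<close>,
  where \<open>p\<close> is the strength of the cookie eaten, so \<open>D\<^sub>n + (k - X\<^sub>n)\<close> is a martingale and optional
  stopping gives \<open>E D\<^bsub>T \<and> n\<^esub> + E (k - X\<^bsub>T \<and> n\<^esub>) = k - x\<close>. By monotone convergence it remains to
  show \<open>E (k - X\<^bsub>T \<and> n\<^esub>) \<rightarrow> 0\<close>. Stopping already at the exit time \<open>S\<close> from \<open>(- m, k)\<close> can
  only increase this expectation (less drift is collected), and \<open>k - X\<^bsub>S \<and> n\<^esub> \<le> (k + m) ([S > n] + [X\<^sub>S = - m])\<close>.
  Two supermartingales bound the two terms: \<open>(k - X) (X + k + 2 m) + n\<close> gives \<open>E S \<le> (k - x) (x + k + 2 m)\<close>,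
  and a product over the sites \<open>- m < z \<le> x\<close>, each first visited with a fresh cookie \<open>\<omega> z 1\<close>, bounds
  the probability to leave at \<open>- m\<close>. The hypothesis on the first cookies makes \<open>k + m\<close> times this
  product small for suitable \<open>m\<close>, and then \<open>n\<close> is taken large.\<close>

lemma set_eq_insert_last_butlast: "xs \<noteq> [] \<Longrightarrow> set xs = insert (last xs) (set (butlast xs))"
  by (induction xs) auto

fun stop_at :: "('a \<Rightarrow> bool) \<Rightarrow> 'a list \<Rightarrow> 'a list" where
  "stop_at B [] = []"
| "stop_at B (y # ys) = (if B y then [y] else y # stop_at B ys)"

lemma stop_at_snoc: "stop_at B (h @ [y]) = (if \<exists>z\<in>set h. B z then stop_at B h else h @ [y])"
  by (induction h) auto

lemma stop_at_id: "\<not> (\<exists>z\<in>set h. B z) \<Longrightarrow> stop_at B h = h"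
  by (induction h) auto

lemma stop_at_eq_Nil_iff [simp]: "stop_at B h = [] \<longleftrightarrow> h = []"
  by (cases h) auto

lemma hd_stop_at [simp]: "hd (stop_at B h) = hd h"
  by (cases h) auto

lemma not_in_butlast_stop_at: "z \<in> set (butlast (stop_at B h)) \<Longrightarrow> \<not> B z"
proof (induction h)
  case (Cons y ys)
  then show ?case by (cases "B y"; cases "stop_at B ys = []") auto
qed simp

lemma last_stop_at: "stop_at B h \<noteq> h \<Longrightarrow> B (last (stop_at B h))"
proof (induction h)
  case (Cons y ys)
  then show ?case by (cases "B y"; cases "ys = []") auto
qed simp

lemma prefix_stop_at: "prefix h h' \<Longrightarrow> prefix (stop_at B h) (stop_at B h')"
proof (induction h arbitrary: h')
  case (Cons a h)
  then obtain h'' where "h' = a # h''" "prefix h h''" by (cases h') auto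
  with Cons.IH show ?case by auto
qed simp

lemma prefix_stop_at_mono: "(\<And>y. B y \<Longrightarrow> B' y) \<Longrightarrow> prefix (stop_at B' h) (stop_at B h)"
proof (induction h)
  case (Cons y ys)
  then show ?case by (cases "B' y") auto
qed simp

section \<open>Series with linearly growing partial sums\<close>

lemma liminf_pos_imp_linear_lower_bound:
  fixes s :: "nat \<Rightarrow> real"
  assumes "0 < liminf (\<lambda>i. ereal (1 / real i * s i))"
  obtains c i0 where "0 < c" "\<And>i. i0 \<le> i \<Longrightarrow> c * real i \<le> s i"
proof -
  obtain c where c: "0 < ereal c" "ereal c < liminf (\<lambda>i. ereal (1 / real i * s i))"
    using ereal_dense2[OF assms] by blast
  obtain i0 where i0: "\<And>i. i0 \<le> i \<Longrightarrow> c < 1 / real i * s i"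
    using less_LiminfD[OF c(2)] unfolding eventually_sequentially by auto
  show ?thesis
  proof (rule that[of c "max i0 1"])
    fix i assume "max i0 1 \<le> i"
    then have "c < 1 / real i * s i" "0 < real i" using i0 by auto
    then show "c * real i \<le> s i" by (simp add: field_simps)
  qed (use c(1) in simp)
qed

lemma sum_div_linear_block:
  fixes a :: "nat \<Rightarrow> real"
  assumes a: "\<And>i. 0 \<le> a i" "\<And>i. a i \<le> 1" and "0 < c" "0 < K + real A"
    and growth: "\<And>N. N0 \<le> N \<Longrightarrow> c * real N - B0 \<le> (\<Sum>i<N. a i)"
  shows "\<exists>B>A. c / 4 \<le> (\<Sum>i\<in>{A..<B}. a i / (K + real i))"
proof -
  define q where "q = (4 * (\<bar>B0\<bar> + real A) + c * \<bar>K\<bar>) / (3 * c)"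
  define B where "B = max N0 (max (A + 1) (nat \<lceil>q\<rceil>))"
  have "A < B" "N0 \<le> B" unfolding B_def by simp_all
  have "q \<le> real B" unfolding B_def by linarith
  then have large: "4 * (\<bar>B0\<bar> + real A) + c * \<bar>K\<bar> \<le> 3 * (c * real B)"
    using \<open>0 < c\<close> unfolding q_def by (simp add: field_simps)
  have "(\<Sum>i<A. a i) \<le> real A"
    using sum_mono[of "{..<A}" a "\<lambda>_. 1"] a by simp
  moreover have "(\<Sum>i<B. a i) = (\<Sum>i<A. a i) + (\<Sum>i\<in>{A..<B}. a i)"
    using sum.atLeastLessThan_concat[of 0 A B a] \<open>A < B\<close> by (simp add: atLeast0LessThan)
  ultimately have "c * real B - B0 - real A \<le> (\<Sum>i\<in>{A..<B}. a i)"
    using growth[OF \<open>N0 \<le> B\<close>] by linarith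
  moreover have "c / 4 * (K + real B) \<le> c * real B - B0 - real A"
  proof -
    have "c * K \<le> c * \<bar>K\<bar>" using \<open>0 < c\<close> by (simp add: mult_left_mono)
    moreover have "c / 4 * (K + real B) = c * K / 4 + c * real B / 4" by (simp add: algebra_simps)
    ultimately show ?thesis using large abs_ge_self[of B0] by argo
  qed
  ultimately have "c / 4 \<le> (\<Sum>i\<in>{A..<B}. a i) / (K + real B)"
    using \<open>0 < K + real A\<close> \<open>A < B\<close> by (simp add: le_divide_eq)
  also have "\<dots> \<le> (\<Sum>i\<in>{A..<B}. a i / (K + real i))"
    unfolding sum_divide_distrib
    using \<open>0 < K + real A\<close> a(1) by (intro sum_mono divide_left_mono) auto
  finally show ?thesis using \<open>A < B\<close> by blast
qed

lemma sum_div_linear_unbounded: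
  fixes a :: "nat \<Rightarrow> real"
  assumes a: "\<And>i. 0 \<le> a i" "\<And>i. a i \<le> 1" and "0 < c" "0 < K + real j0"
    and growth: "\<And>N. N0 \<le> N \<Longrightarrow> c * real N - B0 \<le> (\<Sum>i<N. a i)"
  shows "\<exists>J. R \<le> (\<Sum>i\<in>{j0..<J}. a i / (K + real i))"
proof -
  have "\<exists>J\<ge>j0. real t * (c / 4) \<le> (\<Sum>i\<in>{j0..<J}. a i / (K + real i))" for t
  proof (induction t)
    case (Suc t)
    then obtain J where J: "j0 \<le> J" "real t * (c / 4) \<le> (\<Sum>i\<in>{j0..<J}. a i / (K + real i))"
      by blast
    moreover have "0 < K + real J" using J(1) \<open>0 < K + real j0\<close> by linarith
    then obtain B where "J < B" "c / 4 \<le> (\<Sum>i\<in>{J..<B}. a i / (K + real i))"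
      using sum_div_linear_block[OF a \<open>0 < c\<close> _ growth] by blast
    moreover have "(\<Sum>i\<in>{j0..<B}. a i / (K + real i))
        = (\<Sum>i\<in>{j0..<J}. a i / (K + real i)) + (\<Sum>i\<in>{J..<B}. a i / (K + real i))"
      using J(1) \<open>J < B\<close> by (simp add: sum.atLeastLessThan_concat)
    ultimately show ?case
      by (intro exI[of _ B]) (auto simp: algebra_simps)
  qed (auto intro: exI[of _ j0])
  moreover obtain t :: nat where "R / (c / 4) \<le> real t" using real_arch_simple by blast
  then have "R \<le> real t * (c / 4)" using \<open>0 < c\<close> by (simp add: divide_le_eq)
  ultimately show ?thesis by (meson order_trans)
qed

text \<open>If \<open>q\<close> shrinks by the factors \<open>1 - t j\<close>, then \<open>q j (1 + t j0 + \<dots> + t (j - 1))\<close>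
  is decreasing.\<close>

lemma decay_by_divergent_factors:
  fixes q t :: "nat \<Rightarrow> real"
  assumes q: "\<And>j. j0 \<le> j \<Longrightarrow> 0 \<le> q j" and t: "\<And>j. j0 \<le> j \<Longrightarrow> 0 \<le> t j"
    and rec: "\<And>j. j0 \<le> j \<Longrightarrow> q (Suc j) = q j * (1 - t j)"
    and diverge: "\<And>R. \<exists>J. R \<le> (\<Sum>j\<in>{j0..<J}. t j)" and "0 < e"
  shows "\<exists>j\<ge>j0. q j \<le> e"
proof -
  let ?S = "\<lambda>J. \<Sum>j\<in>{j0..<J}. t j"
  have S_nonneg: "0 \<le> ?S J" for J using t by (intro sum_nonneg) auto
  have decay: "q J * (1 + ?S J) \<le> q j0" if "j0 \<le> J" for J
    using that
  proof (induction J rule: dec_induct)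
    case (step J)
    have "(1 - t J) * (1 + ?S J + t J) = 1 + ?S J - t J * ?S J - t J * t J"
      by (simp add: algebra_simps)
    also have "\<dots> \<le> 1 + ?S J"
      using mult_nonneg_nonneg[OF t[OF step.hyps(1)] S_nonneg[of J]]
        mult_nonneg_nonneg[OF t[OF step.hyps(1)] t[OF step.hyps(1)]] by linarith
    finally have "q J * ((1 - t J) * (1 + ?S J + t J)) \<le> q J * (1 + ?S J)"
      using q[OF step.hyps(1)] by (rule mult_left_mono)
    with step show ?case
      by (simp add: rec mult.assoc add.assoc)
  qed simp
  obtain J where J: "q j0 / e \<le> ?S J" using diverge by blast
  show ?thesis
  proof (cases "j0 \<le> J")
    case True
    have "q J * (1 + ?S J) \<le> q j0" by (rule decay[OF True])
    also have "q j0 \<le> e * ?S J" using J \<open>0 < e\<close> by (simp add: divide_le_eq mult.commute)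
    also have "\<dots> \<le> e * (1 + ?S J)" using \<open>0 < e\<close> by simp
    finally have "q J \<le> e" using S_nonneg[of J] by (simp add: mult_le_cancel_right_pos add_pos_nonneg)
    with True show ?thesis by blast
  next
    case False
    then have "q j0 \<le> 0" using J \<open>0 < e\<close> by (simp add: divide_le_eq)
    then show ?thesis using \<open>0 < e\<close> by (intro exI[of _ j0]) simp
  qed
qed

definition right_prob :: "env \<Rightarrow> int list \<Rightarrow> real" where
  "right_prob \<omega> h = \<omega> (last h) (count_list h (last h))"

lemma hist_Suc_eq:
  "hist \<omega> x u (Suc n) = hist \<omega> x u n @
     [if u n < right_prob \<omega> (hist \<omega> x u n) then last (hist \<omega> x u n) + 1 else last (hist \<omega> x u n) - 1]"
  by (simp add: Let_def right_prob_def)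

declare hist.simps(2) [simp del]

lemma hist_ne_Nil [simp]: "hist \<omega> x u n \<noteq> []"
  by (induction n) (auto simp: hist_Suc_eq)

lemma length_hist [simp]: "length (hist \<omega> x u n) = Suc n"
  by (induction n) (auto simp: hist_Suc_eq)

lemma hd_hist [simp]: "hd (hist \<omega> x u n) = x"
  by (induction n) (auto simp: hist_Suc_eq)

lemma hist_cong: "(\<And>m. m < n \<Longrightarrow> u m = v m) \<Longrightarrow> hist \<omega> x u n = hist \<omega> x v n"
  by (induction n) (auto simp: hist_Suc_eq)

lemma hist_nth: "m \<le> n \<Longrightarrow> hist \<omega> x u n ! m = walk \<omega> x u m"
proof (induction n)
  case 0
  then show ?case by (simp add: walk_def)
next
  case (Suc n)
  show ?case
  proof (cases "m \<le> n")
    case True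
    with Suc show ?thesis unfolding hist_Suc_eq[of \<omega> x u n] by (simp add: nth_append)
  next
    case False
    with Suc.prems have "m = Suc n" by simp
    then show ?thesis by (simp only: walk_def hist_Suc_eq[of \<omega> x u n]) (simp add: nth_append)
  qed
qed

lemma in_set_hist: "z \<in> set (hist \<omega> x u n) \<longleftrightarrow> (\<exists>j\<le>n. walk \<omega> x u j = z)"
  by (auto simp: in_set_conv_nth hist_nth less_Suc_eq_le)

lemma prefix_hist: "n \<le> N \<Longrightarrow> prefix (hist \<omega> x u n) (hist \<omega> x u N)"
proof (induction N rule: dec_induct)
  case (step N)
  then show ?case unfolding hist_Suc_eq[of \<omega> x u N] by (simp add: prefix_append)
qed simp

lemma right_prob_bounds:
  assumes "\<omega> \<in> Omega_plus" "h \<noteq> []"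
  shows "1/2 \<le> right_prob \<omega> h" "right_prob \<omega> h \<le> 1"
proof -
  have "count_list h (last h) \<noteq> 0"
    using assms(2) by (simp add: count_list_0_iff)
  then show "1/2 \<le> right_prob \<omega> h" "right_prob \<omega> h \<le> 1"
    using assms(1) unfolding Omega_plus_def right_prob_def by auto
qed

definition reachable :: "env \<Rightarrow> int \<Rightarrow> int list \<Rightarrow> bool" where
  "reachable \<omega> x h \<longleftrightarrow> (\<exists>n u. h = hist \<omega> x u n)"

lemma reachable_hist: "reachable \<omega> x (hist \<omega> x u n)"
  unfolding reachable_def by blast

lemma reachableD: "reachable \<omega> x h \<Longrightarrow> h \<noteq> [] \<and> hd h = x"
  unfolding reachable_def by auto

lemma reachable_snoc:
  assumes "\<omega> \<in> Omega_plus" "reachable \<omega> x h"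
  shows "reachable \<omega> x (h @ [last h + 1])" "reachable \<omega> x (h @ [last h - 1])"
proof -
  obtain n u where h: "h = hist \<omega> x u n"
    using assms(2) unfolding reachable_def by blast
  have p: "1/2 \<le> right_prob \<omega> h" "right_prob \<omega> h \<le> 1"
    using right_prob_bounds[OF assms(1)] h by auto
  have "hist \<omega> x (u(n := t)) n = h" for t
    unfolding h by (rule hist_cong) auto
  then have "hist \<omega> x (u(n := 0)) (Suc n) = h @ [last h + 1]"
    and "hist \<omega> x (u(n := 1)) (Suc n) = h @ [last h - 1]"
    using p by (simp_all add: hist_Suc_eq)
  then show "reachable \<omega> x (h @ [last h + 1])" "reachable \<omega> x (h @ [last h - 1])"
    unfolding reachable_def by metis+
qed

lemma sum_sites_eq_sum_times:
  fixes f :: "nat \<Rightarrow> 'a" and g :: "'a \<Rightarrow> nat \<Rightarrow> 'b::comm_monoid_add"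
  shows "(\<Sum>z\<in>f ` {..<n}. \<Sum>i\<in>{1..card {m. m < n \<and> f m = z}}. g z i) =
         (\<Sum>m<n. g (f m) (card {j. j \<le> m \<and> f j = f m}))"
proof (induction n)
  case (Suc n)
  define c where "c z = card {m. m < n \<and> f m = z}" for z
  have c_Suc: "card {m. m < Suc n \<and> f m = z} = c z + (if f n = z then 1 else 0)" for z
  proof -
    have "{m. m < Suc n \<and> f m = z} = {m. m < n \<and> f m = z} \<union> (if f n = z then {n} else {})"
      by (auto simp: less_Suc_eq)
    then show ?thesis
      unfolding c_def by (simp add: card_Un_disjoint)
  qed
  have c_n: "card {j. j \<le> n \<and> f j = f n} = c (f n) + 1"
  proof -
    have "{j. j \<le> n \<and> f j = f n} = insert n {m. m < n \<and> f m = f n}" by auto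
    then show ?thesis unfolding c_def by simp
  qed
  have new_site: "\<forall>z\<in>f ` {..<Suc n} - f ` {..<n}. (\<Sum>i\<in>{1..c z}. g z i) = 0"
  proof
    fix z assume "z \<in> f ` {..<Suc n} - f ` {..<n}"
    then have "{m. m < n \<and> f m = z} = {}" by blast
    then show "(\<Sum>i\<in>{1..c z}. g z i) = 0" unfolding c_def by simp
  qed
  have "(\<Sum>z\<in>f ` {..<Suc n}. \<Sum>i\<in>{1..card {m. m < Suc n \<and> f m = z}}. g z i)
      = (\<Sum>z\<in>f ` {..<Suc n}. (\<Sum>i\<in>{1..c z}. g z i) + (if f n = z then g z (c z + 1) else 0))"
    by (rule sum.cong) (auto simp: c_Suc)
  also have "\<dots> = (\<Sum>z\<in>f ` {..<Suc n}. \<Sum>i\<in>{1..c z}. g z i) + g (f n) (c (f n) + 1)"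
    by (simp add: sum.distrib sum.delta')
  also have "(\<Sum>z\<in>f ` {..<Suc n}. \<Sum>i\<in>{1..c z}. g z i) = (\<Sum>z\<in>f ` {..<n}. \<Sum>i\<in>{1..c z}. g z i)"
    by (rule sum.mono_neutral_right) (use new_site in auto)
  finally show ?case
    using Suc.IH c_n unfolding c_def by simp
qed simp

lemma count_list_eq_card: "count_list xs z = card {j. j < length xs \<and> xs ! j = z}"
proof (induction xs rule: rev_induct)
  case (snoc y xs)
  have e: "{j. j < length (xs @ [y]) \<and> (xs @ [y]) ! j = z} =
      {j. j < length xs \<and> xs ! j = z} \<union> (if y = z then {length xs} else {})"
    by (auto simp: nth_append less_Suc_eq)
  show ?case
    unfolding e using snoc by (subst card_Un_disjoint) auto
qed simp

definition drift_sum :: "env \<Rightarrow> int list \<Rightarrow> real" where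
  "drift_sum \<omega> h = (\<Sum>m<length h - 1. 2 * \<omega> (h ! m) (count_list (take (Suc m) h) (h ! m)) - 1)"

lemma D_eq_drift_sum: "D \<omega> x u n = drift_sum \<omega> (hist \<omega> x u n)"
proof -
  have "D \<omega> x u n =
      (\<Sum>m<n. 2 * \<omega> (walk \<omega> x u m) (card {j. j \<le> m \<and> walk \<omega> x u j = walk \<omega> x u m}) - 1)"
    unfolding D_def Dz_def by (rule sum_sites_eq_sum_times)
  also have "\<dots> = drift_sum \<omega> (hist \<omega> x u n)"
    unfolding drift_sum_def
  proof (simp, rule sum.cong)
    fix m assume "m \<in> {..<n}"
    then have "count_list (take (Suc m) (hist \<omega> x u n)) (walk \<omega> x u m)
       = card {j. j \<le> m \<and> walk \<omega> x u j = walk \<omega> x u m}"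
      unfolding count_list_eq_card by (intro arg_cong[where f=card]) (auto simp: hist_nth)
    with \<open>m \<in> {..<n}\<close> show "2 * \<omega> (walk \<omega> x u m) (card {j. j \<le> m \<and> walk \<omega> x u j = walk \<omega> x u m}) - 1 =
        2 * \<omega> (hist \<omega> x u n ! m) (count_list (take (Suc m) (hist \<omega> x u n)) (hist \<omega> x u n ! m)) - 1"
      by (simp add: hist_nth)
  qed simp
  finally show ?thesis .
qed

lemma drift_sum_singleton [simp]: "drift_sum \<omega> [y] = 0"
  unfolding drift_sum_def by simp

lemma drift_sum_snoc: "h \<noteq> [] \<Longrightarrow> drift_sum \<omega> (h @ [y]) = drift_sum \<omega> h + (2 * right_prob \<omega> h - 1)"
proof -
  assume "h \<noteq> []"
  then obtain l where l: "length h = Suc l" by (cases h) auto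
  with \<open>h \<noteq> []\<close> have "h ! l = last h" by (simp add: last_conv_nth)
  then show ?thesis
    unfolding drift_sum_def right_prob_def using l by (simp add: nth_append)
qed

lemma drift_sum_term_nonneg:
  assumes "\<omega> \<in> Omega_plus" "m < length h"
  shows "0 \<le> 2 * \<omega> (h ! m) (count_list (take (Suc m) h) (h ! m)) - 1"
proof -
  have "h ! m \<in> set (take (Suc m) h)"
    using assms(2) by (metis in_set_conv_nth length_take lessI min_less_iff_conj nth_take)
  then have "1 \<le> count_list (take (Suc m) h) (h ! m)"
    by (metis count_list_0_iff less_one not_le)
  then have "1/2 \<le> \<omega> (h ! m) (count_list (take (Suc m) h) (h ! m))"
    using assms(1) unfolding Omega_plus_def by blast
  then show ?thesis by linarith
qed

lemma drift_sum_nonneg: "\<omega> \<in> Omega_plus \<Longrightarrow> 0 \<le> drift_sum \<omega> h"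
  unfolding drift_sum_def by (rule sum_nonneg) (rule drift_sum_term_nonneg, auto)

lemma drift_sum_prefix_mono:
  assumes "\<omega> \<in> Omega_plus" "prefix h h'"
  shows "drift_sum \<omega> h \<le> drift_sum \<omega> h'"
proof -
  obtain r where h': "h' = h @ r" using assms(2) by (auto simp: prefix_def)
  have "drift_sum \<omega> h = (\<Sum>m<length h - 1. 2 * \<omega> (h' ! m) (count_list (take (Suc m) h') (h' ! m)) - 1)"
    unfolding drift_sum_def h' by (rule sum.cong) (auto simp: nth_append)
  also have "\<dots> \<le> drift_sum \<omega> h'"
    unfolding drift_sum_def
  proof (rule sum_mono2)
    fix m assume "m \<in> {..<length h' - 1} - {..<length h - 1}"
    then show "0 \<le> 2 * \<omega> (h' ! m) (count_list (take (Suc m) h') (h' ! m)) - 1"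
      by (intro drift_sum_term_nonneg[OF assms(1)]) auto
  qed (auto simp: h')
  finally show ?thesis .
qed

section \<open>Integrating one step of the walk\<close>

definition unif01 :: "real measure" where
  "unif01 = uniform_measure lborel {0..1}"

lemma prob_space_unif01: "prob_space unif01"
  unfolding unif01_def by (rule prob_space_uniform_measure) auto

lemma sets_unif01 [simp]: "sets unif01 = sets borel"
  unfolding unif01_def by simp

lemma unif_seq_eq_PiM: "unif_seq = PiM UNIV (\<lambda>_. unif01)"
  unfolding unif_seq_def unif01_def ..

lemma prob_space_unif_seq: "prob_space unif_seq"
  unfolding unif_seq_eq_PiM by (rule prob_space_PiM) (rule prob_space_unif01)

lemma measurable_component_unif01 [measurable]:
  "(\<lambda>w. w n) \<in> borel_measurable (PiM UNIV (\<lambda>_. unif01))"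
proof -
  have "(\<lambda>w. w n) \<in> measurable (PiM UNIV (\<lambda>_. unif01)) unif01"
    by (rule measurable_component_singleton) simp
  then show ?thesis by (simp add: measurable_cong_sets[OF refl sets_unif01])
qed

lemma measurable_hist: "(\<lambda>u. hist \<omega> x u n) \<in> measurable unif_seq (count_space UNIV)"
proof (induction n)
  case (Suc n)
  let ?f = "\<lambda>h u. h @ [if u n < right_prob \<omega> h then last h + 1 else last h - 1]"
  have "(\<lambda>u. ?f h u) \<in> measurable unif_seq (count_space UNIV)" for h
    unfolding unif_seq_eq_PiM by measurable
  then show ?case
    unfolding hist_Suc_eq by (rule measurable_compose_countable'[OF _ Suc]) auto
qed simp

lemma borel_measurable_hist [measurable]: "(\<lambda>u. G (hist \<omega> x u n)) \<in> borel_measurable unif_seq"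
  using measurable_hist by (rule measurable_compose) simp

lemma nn_integral_unif01_threshold:
  assumes "0 \<le> a" "a \<le> 1"
  shows "(\<integral>\<^sup>+ t. G (if t < a then p else q) \<partial>unif01) = ennreal a * G p + ennreal (1 - a) * G q"
proof -
  have "{0..1} \<inter> {..<a} = {0..<a}" "{0..1} \<inter> {a..} = {a..1}"
    using assms by auto
  then have below: "emeasure unif01 {..<a} = ennreal a"
    and above: "emeasure unif01 {a..} = ennreal (1 - a)"
    unfolding unif01_def using assms by (simp_all add: emeasure_uniform_measure divide_ennreal_def)
  have "(\<integral>\<^sup>+ t. G (if t < a then p else q) \<partial>unif01) =
      (\<integral>\<^sup>+ t. G p * indicator {..<a} t + G q * indicator {a..} t \<partial>unif01)"
    by (rule nn_integral_cong) (auto simp: indicator_def not_less)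
  also have "\<dots> = G p * emeasure unif01 {..<a} + G q * emeasure unif01 {a..}"
    by (subst nn_integral_add)
      (simp_all only: measurable_cong_sets[OF sets_unif01 refl] borel_measurable_indicator
        borel_measurable_times_ennreal borel_measurable_const atLeast_borel lessThan_borel
        nn_integral_cmult_indicator sets_unif01)
  finally show ?thesis by (simp add: below above mult.commute)
qed

lemma measurable_fun_upd_pair:
  "(\<lambda>(t, X::nat \<Rightarrow> real). X(n := t)) \<in> measurable (unif01 \<Otimes>\<^sub>M PiM UNIV (\<lambda>_. unif01)) (PiM UNIV (\<lambda>_. unif01))"
proof -
  have "(\<lambda>(t, X). X(n := t)) = (\<lambda>p::real \<times> (nat \<Rightarrow> real). (snd p)(n := fst p))" by auto
  then show ?thesis
    by (simp only:) (rule measurable_fun_upd[where J=UNIV, OF _ measurable_snd measurable_fst], simp)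
qed

text \<open>The step at time \<open>n\<close> only depends on the coordinate \<open>u n\<close>, which is independent of the
  history up to time \<open>n\<close>; resampling this coordinate leaves \<open>unif_seq\<close> invariant.\<close>

lemma nn_integral_hist_Suc:
  assumes "\<And>u. 0 \<le> right_prob \<omega> (hist \<omega> x u n) \<and> right_prob \<omega> (hist \<omega> x u n) \<le> 1"
  shows "(\<integral>\<^sup>+ u. G (hist \<omega> x u (Suc n)) \<partial>unif_seq) =
    (\<integral>\<^sup>+ u. ennreal (right_prob \<omega> (hist \<omega> x u n)) * G (hist \<omega> x u n @ [last (hist \<omega> x u n) + 1])
       + ennreal (1 - right_prob \<omega> (hist \<omega> x u n)) * G (hist \<omega> x u n @ [last (hist \<omega> x u n) - 1]) \<partial>unif_seq)"
proof -
  let ?P = "PiM UNIV (\<lambda>_::nat. unif01)"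
  let ?upd = "\<lambda>(t, X::nat \<Rightarrow> real). X(n := t)"
  interpret unif01: prob_space unif01 by (rule prob_space_unif01)
  interpret P: prob_space ?P using prob_space_unif_seq unfolding unif_seq_eq_PiM .
  interpret pair_sigma_finite unif01 ?P by unfold_locales
  have distr_upd: "distr (unif01 \<Otimes>\<^sub>M ?P) ?P ?upd = ?P"
    using distr_pair_PiM_eq_PiM[of UNIV "\<lambda>_. unif01" n] prob_space_unif01 by simp
  have G_meas: "(\<lambda>u. G (hist \<omega> x u (Suc n))) \<in> borel_measurable ?P"
    using borel_measurable_hist unfolding unif_seq_eq_PiM .
  have hist_upd: "hist \<omega> x (X(n := t)) (Suc n) = hist \<omega> x X n @
      [if t < right_prob \<omega> (hist \<omega> x X n) then last (hist \<omega> x X n) + 1 else last (hist \<omega> x X n) - 1]"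
    for X t
  proof -
    have same_past: "hist \<omega> x (X(n := t)) n = hist \<omega> x X n" by (rule hist_cong) auto
    show ?thesis by (simp add: hist_Suc_eq same_past)
  qed
  have "(\<integral>\<^sup>+ u. G (hist \<omega> x u (Suc n)) \<partial>unif_seq) =
      (\<integral>\<^sup>+ u. G (hist \<omega> x u (Suc n)) \<partial>distr (unif01 \<Otimes>\<^sub>M ?P) ?P ?upd)"
    unfolding distr_upd unif_seq_eq_PiM ..
  also have "\<dots> = (\<integral>\<^sup>+ p. G (hist \<omega> x (?upd p) (Suc n)) \<partial>(unif01 \<Otimes>\<^sub>M ?P))"
    by (rule nn_integral_distr[OF measurable_fun_upd_pair]) (simp only: measurable_distr_eq1 G_meas)
  also have "\<dots> = (\<integral>\<^sup>+ X. \<integral>\<^sup>+ t. G (hist \<omega> x (X(n := t)) (Suc n)) \<partial>unif01 \<partial>?P)"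
    using nn_integral_snd[OF measurable_compose[OF measurable_fun_upd_pair[of n] G_meas]] by simp
  also have "\<dots> = (\<integral>\<^sup>+ X. ennreal (right_prob \<omega> (hist \<omega> x X n)) * G (hist \<omega> x X n @ [last (hist \<omega> x X n) + 1])
       + ennreal (1 - right_prob \<omega> (hist \<omega> x X n)) * G (hist \<omega> x X n @ [last (hist \<omega> x X n) - 1]) \<partial>?P)"
    unfolding hist_upd using assms
    by (intro nn_integral_cong nn_integral_unif01_threshold[where G="\<lambda>y. G (_ @ [y])"]) auto
  finally show ?thesis unfolding unif_seq_eq_PiM .
qed

definition step_mean :: "env \<Rightarrow> (int list \<Rightarrow> real) \<Rightarrow> int list \<Rightarrow> real" where
  "step_mean \<omega> F h = right_prob \<omega> h * F (h @ [last h + 1]) + (1 - right_prob \<omega> h) * F (h @ [last h - 1])"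

lemma step_mean_linear:
  "step_mean \<omega> (\<lambda>h. a * F h + b * G h) h = a * step_mean \<omega> F h + b * step_mean \<omega> G h"
  unfolding step_mean_def by (simp add: algebra_simps)

lemma step_mean_stop_at:
  "\<exists>z\<in>set h. B z \<Longrightarrow> step_mean \<omega> (\<lambda>h. F (stop_at B h)) h = F (stop_at B h)"
  unfolding step_mean_def by (simp add: stop_at_snoc algebra_simps)

lemma nn_integral_hist_Suc_step_mean:
  assumes \<omega>: "\<omega> \<in> Omega_plus" and F_nonneg: "\<And>h. reachable \<omega> x h \<Longrightarrow> 0 \<le> F h"
  shows "(\<integral>\<^sup>+ u. ennreal (F (hist \<omega> x u (Suc n))) \<partial>unif_seq) =
    (\<integral>\<^sup>+ u. ennreal (step_mean \<omega> F (hist \<omega> x u n)) \<partial>unif_seq)"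
proof -
  have p: "0 \<le> right_prob \<omega> (hist \<omega> x u n) \<and> right_prob \<omega> (hist \<omega> x u n) \<le> 1" for u
    using right_prob_bounds[OF \<omega>, of "hist \<omega> x u n"] by simp
  have "(\<integral>\<^sup>+ u. ennreal (F (hist \<omega> x u (Suc n))) \<partial>unif_seq) =
    (\<integral>\<^sup>+ u. ennreal (right_prob \<omega> (hist \<omega> x u n)) * ennreal (F (hist \<omega> x u n @ [last (hist \<omega> x u n) + 1]))
       + ennreal (1 - right_prob \<omega> (hist \<omega> x u n)) * ennreal (F (hist \<omega> x u n @ [last (hist \<omega> x u n) - 1])) \<partial>unif_seq)"
    by (rule nn_integral_hist_Suc[OF p])
  also have "\<dots> = (\<integral>\<^sup>+ u. ennreal (step_mean \<omega> F (hist \<omega> x u n)) \<partial>unif_seq)"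
  proof (rule nn_integral_cong)
    fix u
    let ?h = "hist \<omega> x u n"
    have "0 \<le> F (?h @ [last ?h + 1])" "0 \<le> F (?h @ [last ?h - 1])"
      using F_nonneg reachable_snoc[OF \<omega> reachable_hist] by auto
    then show "ennreal (right_prob \<omega> ?h) * ennreal (F (?h @ [last ?h + 1]))
        + ennreal (1 - right_prob \<omega> ?h) * ennreal (F (?h @ [last ?h - 1]))
        = ennreal (step_mean \<omega> F ?h)"
      unfolding step_mean_def using p[of u] by (simp add: ennreal_mult)
  qed
  finally show ?thesis .
qed

lemma nn_integral_hist_superharmonic:
  assumes \<omega>: "\<omega> \<in> Omega_plus" and F_nonneg: "\<And>h. reachable \<omega> x h \<Longrightarrow> 0 \<le> F h"
    and super: "\<And>h. reachable \<omega> x h \<Longrightarrow> step_mean \<omega> F h \<le> F h"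
  shows "(\<integral>\<^sup>+ u. ennreal (F (hist \<omega> x u n)) \<partial>unif_seq) \<le> ennreal (F [x])"
proof (induction n)
  case 0
  interpret prob_space unif_seq by (rule prob_space_unif_seq)
  show ?case by (simp add: emeasure_space_1)
next
  case (Suc n)
  have "(\<integral>\<^sup>+ u. ennreal (F (hist \<omega> x u (Suc n))) \<partial>unif_seq) =
      (\<integral>\<^sup>+ u. ennreal (step_mean \<omega> F (hist \<omega> x u n)) \<partial>unif_seq)"
    using \<omega> F_nonneg by (rule nn_integral_hist_Suc_step_mean)
  also have "\<dots> \<le> (\<integral>\<^sup>+ u. ennreal (F (hist \<omega> x u n)) \<partial>unif_seq)"
    by (intro nn_integral_mono ennreal_leI super reachable_hist)
  finally show ?case using Suc.IH by simp
qed

lemma nn_integral_hist_harmonic: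
  assumes \<omega>: "\<omega> \<in> Omega_plus" and F_nonneg: "\<And>h. reachable \<omega> x h \<Longrightarrow> 0 \<le> F h"
    and harmonic: "\<And>h. reachable \<omega> x h \<Longrightarrow> step_mean \<omega> F h = F h"
  shows "(\<integral>\<^sup>+ u. ennreal (F (hist \<omega> x u n)) \<partial>unif_seq) = ennreal (F [x])"
proof (induction n)
  case 0
  interpret prob_space unif_seq by (rule prob_space_unif_seq)
  show ?case by (simp add: emeasure_space_1)
next
  case (Suc n)
  have "(\<integral>\<^sup>+ u. ennreal (F (hist \<omega> x u (Suc n))) \<partial>unif_seq) =
      (\<integral>\<^sup>+ u. ennreal (step_mean \<omega> F (hist \<omega> x u n)) \<partial>unif_seq)"
    using \<omega> F_nonneg by (rule nn_integral_hist_Suc_step_mean)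
  also have "\<dots> = (\<integral>\<^sup>+ u. ennreal (F (hist \<omega> x u n)) \<partial>unif_seq)"
    by (simp add: harmonic reachable_hist)
  finally show ?case using Suc.IH by simp
qed

lemma reachable_stop_at: "reachable \<omega> x h \<Longrightarrow> reachable \<omega> x (stop_at B h)"
proof -
  have "reachable \<omega> x (stop_at B (hist \<omega> x u n))" for u n
  proof (induction n)
    case 0
    then show ?case using reachable_hist[of \<omega> x u 0] by simp
  next
    case (Suc n)
    then show ?case
      using reachable_hist[of \<omega> x u "Suc n"] unfolding hist_Suc_eq stop_at_snoc by auto
  qed
  then show "reachable \<omega> x h \<Longrightarrow> reachable \<omega> x (stop_at B h)"
    unfolding reachable_def by blast
qed

lemma stop_at_hist:
  "stop_at (\<lambda>y. y = k) (hist \<omega> x u n) =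
    (if \<exists>j\<le>n. walk \<omega> x u j = k then hist \<omega> x u (LEAST j. walk \<omega> x u j = k) else hist \<omega> x u n)"
proof (induction n)
  case 0
  then show ?case by (auto simp: walk_def Least_eq_0)
next
  case (Suc n)
  have step: "stop_at (\<lambda>y. y = k) (hist \<omega> x u (Suc n)) =
     (if \<exists>j\<le>n. walk \<omega> x u j = k then stop_at (\<lambda>y. y = k) (hist \<omega> x u n) else hist \<omega> x u (Suc n))"
    unfolding hist_Suc_eq[of \<omega> x u n] stop_at_snoc in_set_hist[symmetric] by auto
  consider (before) "\<exists>j\<le>n. walk \<omega> x u j = k" | (now) "walk \<omega> x u (Suc n) = k" "\<not> (\<exists>j\<le>n. walk \<omega> x u j = k)"
    | (never) "\<not> (\<exists>j\<le>Suc n. walk \<omega> x u j = k)"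
    by (auto simp: le_Suc_eq)
  then show ?case
  proof cases
    case before
    then have "\<exists>j\<le>Suc n. walk \<omega> x u j = k" using le_SucI by blast
    with before step Suc.IH show ?thesis by simp
  next
    case now
    then have "(LEAST j. walk \<omega> x u j = k) = Suc n"
      by (intro Least_equality) (auto simp: not_less_eq_eq[symmetric])
    with now step show ?thesis by auto
  next
    case never
    then have not_before: "\<not> (\<exists>j\<le>n. walk \<omega> x u j = k)" by auto
    show ?thesis unfolding step if_not_P[OF never] if_not_P[OF not_before] ..
  qed
qed

text \<open>The least site visited before the present time; the default \<open>hd h + 1\<close> makes
  \<open>last h < prev_min h\<close> say that the present site is new also for \<open>h = [x]\<close>.\<close>

definition prev_min :: "int list \<Rightarrow> int" where
  "prev_min h = Min (insert (hd h + 1) (set (butlast h)))"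

lemma prev_min_snoc: "h \<noteq> [] \<Longrightarrow> prev_min (h @ [y]) = min (prev_min h) (last h)"
proof -
  assume "h \<noteq> []"
  then have "set h = insert (last h) (set (butlast h))"
    by (rule set_eq_insert_last_butlast)
  with \<open>h \<noteq> []\<close> show ?thesis
    unfolding prev_min_def by (simp add: insert_commute min.commute)
qed

lemma prev_min_le: "z \<in> set (butlast h) \<Longrightarrow> prev_min h \<le> z"
  unfolding prev_min_def by simp

lemma prev_min_le_hd: "prev_min h \<le> hd h + 1"
  unfolding prev_min_def by simp

lemma prev_min_greatest: "(\<And>z. z \<in> set (butlast h) \<Longrightarrow> c \<le> z) \<Longrightarrow> c \<le> hd h + 1 \<Longrightarrow> c \<le> prev_min h"
  unfolding prev_min_def by simp

lemma count_list_last_fresh: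
  assumes "h \<noteq> []" "last h < prev_min h"
  shows "count_list h (last h) = 1"
proof -
  have "count_list (butlast h) (last h) = 0"
    using prev_min_le assms(2) by (force simp: count_list_0_iff)
  moreover have "h = butlast h @ [last h]" using assms(1) by simp
  ultimately show ?thesis by (metis count_list_append count_list.simps add_0 if_True)
qed

lemma reachable_prev_min: "reachable \<omega> x h \<Longrightarrow> prev_min h - 1 \<le> last h"
proof -
  have "prev_min (hist \<omega> x u n) - 1 \<le> last (hist \<omega> x u n)" for u n
    by (induction n) (auto simp: prev_min_def[of "[x]"] hist_Suc_eq prev_min_snoc min_def)
  then show "reachable \<omega> x h \<Longrightarrow> prev_min h - 1 \<le> last h"
    unfolding reachable_def by blast
qed

lemma reachable_last_less:
  assumes "x \<le> k" "reachable \<omega> x h" "k \<notin> set h"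
  shows "last h < k"
proof -
  have "k \<notin> set (hist \<omega> x u n) \<Longrightarrow> last (hist \<omega> x u n) < k" for u n
    using assms(1) by (induction n) (auto simp: hist_Suc_eq)
  with assms(2,3) show ?thesis unfolding reachable_def by blast
qed

lemma last_stop_at_le:
  assumes "x \<le> k" "B k" "reachable \<omega> x h"
  shows "last (stop_at B h) \<le> k"
proof (cases "k \<in> set (stop_at B h)")
  case True
  have ne: "stop_at B h \<noteq> []" using reachableD[OF assms(3)] by simp
  have "k \<notin> set (butlast (stop_at B h))" using not_in_butlast_stop_at[of k B h] assms(2) by blast
  moreover from ne have "set (stop_at B h) = insert (last (stop_at B h)) (set (butlast (stop_at B h)))"
    by (rule set_eq_insert_last_butlast)
  ultimately have "k = last (stop_at B h)" using True by blast
  then show ?thesis by simp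
next
  case False
  with reachable_last_less[OF assms(1) reachable_stop_at[of \<omega> x h B, OF assms(3)]] show ?thesis
    by simp
qed

lemma prev_min_stop_at_gt:
  assumes "reachable \<omega> x h" "\<And>y. y \<le> c \<Longrightarrow> B y" "c < x"
  shows "c < prev_min (stop_at B h)"
proof -
  have "c + 1 \<le> prev_min (stop_at B h)"
  proof (rule prev_min_greatest)
    fix z assume "z \<in> set (butlast (stop_at B h))"
    then have "\<not> B z" by (rule not_in_butlast_stop_at)
    with assms(2) have "\<not> z \<le> c" by blast
    then show "c + 1 \<le> z" by linarith
  qed (use reachableD[OF assms(1)] assms(3) in simp)
  then show ?thesis by simp
qed

lemma last_stop_at_ge:
  assumes "reachable \<omega> x h" "\<And>y. y \<le> c \<Longrightarrow> B y" "c < x"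
  shows "c \<le> last (stop_at B h)"
  using prev_min_stop_at_gt[of \<omega> x h c B, OF assms]
    reachable_prev_min[OF reachable_stop_at[of \<omega> x h B, OF assms(1)]]
  by linarith

section \<open>Optional stopping\<close>

text \<open>The step from a site where the cookie of strength \<open>p\<close> is eaten has mean \<open>2 p - 1\<close>,
  the drift of that cookie; hence \<open>D + (k - X)\<close> is a martingale.\<close>

lemma step_mean_stopped_drift_distance:
  assumes "reachable \<omega> x h"
  shows "step_mean \<omega> (\<lambda>h. drift_sum \<omega> (stop_at B h) + real_of_int (k - last (stop_at B h))) h
      = drift_sum \<omega> (stop_at B h) + real_of_int (k - last (stop_at B h))"
proof (cases "\<exists>z\<in>set h. B z")
  case True
  then show ?thesis by (rule step_mean_stop_at)
next
  case False
  have "h \<noteq> []" using reachableD[OF assms] by simp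
  with False show ?thesis
    unfolding step_mean_def stop_at_snoc by (simp add: stop_at_id drift_sum_snoc algebra_simps)
qed

lemma nn_integral_stopped_drift_add_distance:
  assumes \<omega>: "\<omega> \<in> Omega_plus" and "x \<le> k" "B k"
  shows "(\<integral>\<^sup>+ u. ennreal (drift_sum \<omega> (stop_at B (hist \<omega> x u n))) \<partial>unif_seq) +
         (\<integral>\<^sup>+ u. ennreal (real_of_int (k - last (stop_at B (hist \<omega> x u n)))) \<partial>unif_seq)
       = ennreal (real_of_int (k - x))"
proof -
  let ?F = "\<lambda>h. drift_sum \<omega> (stop_at B h) + real_of_int (k - last (stop_at B h))"
  have dist_nonneg: "last (stop_at B h) \<le> k" if "reachable \<omega> x h" for h
    using last_stop_at_le[of x k B \<omega> h, OF assms(2,3) that] .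
  have F_nonneg: "0 \<le> ?F h" if "reachable \<omega> x h" for h
    using drift_sum_nonneg[OF \<omega>] dist_nonneg[OF that] by simp
  have "(\<integral>\<^sup>+ u. ennreal (?F (hist \<omega> x u n)) \<partial>unif_seq) = ennreal (?F [x])"
    by (rule nn_integral_hist_harmonic[OF \<omega> F_nonneg step_mean_stopped_drift_distance])
  also have "(\<integral>\<^sup>+ u. ennreal (?F (hist \<omega> x u n)) \<partial>unif_seq) =
     (\<integral>\<^sup>+ u. ennreal (drift_sum \<omega> (stop_at B (hist \<omega> x u n)))
        + ennreal (real_of_int (k - last (stop_at B (hist \<omega> x u n)))) \<partial>unif_seq)"
    using drift_sum_nonneg[OF \<omega>] dist_nonneg[OF reachable_hist] by (intro nn_integral_cong ennreal_plus) auto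
  also have "\<dots> = (\<integral>\<^sup>+ u. ennreal (drift_sum \<omega> (stop_at B (hist \<omega> x u n))) \<partial>unif_seq) +
         (\<integral>\<^sup>+ u. ennreal (real_of_int (k - last (stop_at B (hist \<omega> x u n)))) \<partial>unif_seq)"
    by (rule nn_integral_add) simp_all
  finally show ?thesis by simp
qed

lemma nn_integral_distance_stop_at_mono:
  assumes \<omega>: "\<omega> \<in> Omega_plus" and "x \<le> k" "B k" and B_B': "\<And>y. B y \<Longrightarrow> B' y"
  shows "(\<integral>\<^sup>+ u. ennreal (real_of_int (k - last (stop_at B (hist \<omega> x u n)))) \<partial>unif_seq)
      \<le> (\<integral>\<^sup>+ u. ennreal (real_of_int (k - last (stop_at B' (hist \<omega> x u n)))) \<partial>unif_seq)"
    (is "?C \<le> ?C'")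
proof -
  let ?A = "\<integral>\<^sup>+ u. ennreal (drift_sum \<omega> (stop_at B (hist \<omega> x u n))) \<partial>unif_seq"
  let ?A' = "\<integral>\<^sup>+ u. ennreal (drift_sum \<omega> (stop_at B' (hist \<omega> x u n))) \<partial>unif_seq"
  have sum: "?A + ?C = ennreal (real_of_int (k - x))"
    by (rule nn_integral_stopped_drift_add_distance[of \<omega> x k B, OF \<omega> assms(2,3)])
  have sum': "?A' + ?C' = ennreal (real_of_int (k - x))"
    by (rule nn_integral_stopped_drift_add_distance[of \<omega> x k B', OF \<omega> assms(2)]) (use assms(3) B_B' in blast)
  have "?A' \<le> ?A"
    by (intro nn_integral_mono ennreal_leI drift_sum_prefix_mono[OF \<omega>] prefix_stop_at_mono B_B')
  have "?A + ?C = ?A' + ?C'" using sum sum' by simp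
  also have "\<dots> \<le> ?A + ?C'" using \<open>?A' \<le> ?A\<close> by (rule add_right_mono)
  finally have "?A + ?C \<le> ?A + ?C'" .
  moreover have "?A \<noteq> \<infinity>"
  proof
    assume "?A = \<infinity>"
    with sum show False by simp
  qed
  ultimately show ?thesis by (simp add: ennreal_add_left_cancel_le)
qed

section \<open>Leaving an interval\<close>

definition exit_set :: "int \<Rightarrow> nat \<Rightarrow> int \<Rightarrow> bool" where
  "exit_set k m y \<longleftrightarrow> y = k \<or> y \<le> - int m"

lemma last_stop_exit_set_bounds:
  assumes "x < k" "- int m < x" "reachable \<omega> x h"
  shows "- int m \<le> last (stop_at (exit_set k m) h)" "last (stop_at (exit_set k m) h) \<le> k"
  using last_stop_at_ge[OF assms(3), of "- int m"] last_stop_at_le[of x k _ \<omega> h] assms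
  by (auto simp: exit_set_def)

lemma unstopped_exit_set_bounds:
  assumes "x < k" "- int m < x" "reachable \<omega> x h" "\<not> (\<exists>z\<in>set h. exit_set k m z)"
  shows "- int m < last h" "last h < k" "- int m < prev_min h"
proof -
  have "h \<noteq> []" using reachableD[OF assms(3)] by simp
  then have "\<not> exit_set k m (last h)" using assms(4) by simp
  then show "- int m < last h" by (simp add: exit_set_def)
  have "k \<notin> set h" using assms(4) unfolding exit_set_def by blast
  with reachable_last_less[OF _ assms(3)] assms(1) show "last h < k" by simp
  show "- int m < prev_min h"
    using prev_min_stop_at_gt[OF assms(3), of "- int m" "exit_set k m"] assms(2,4)
    by (simp add: exit_set_def stop_at_id)
qed

text \<open>With nonnegative drift, \<open>(k - X) (X + k + 2 m) + t\<close> decreases in mean while \<open>- m < X < k\<close>.\<close>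

definition exit_time_bound :: "int \<Rightarrow> nat \<Rightarrow> int \<Rightarrow> real" where
  "exit_time_bound k m X = real_of_int ((k - X) * (X + k + 2 * int m))"

definition exit_time_potential :: "int \<Rightarrow> nat \<Rightarrow> int list \<Rightarrow> real" where
  "exit_time_potential k m h =
     exit_time_bound k m (last (stop_at (exit_set k m) h)) + real (length (stop_at (exit_set k m) h) - 1)"

lemma exit_time_bound_nonneg: "- int m \<le> X \<Longrightarrow> X \<le> k \<Longrightarrow> 0 \<le> exit_time_bound k m X"
  unfolding exit_time_bound_def by simp

lemma exit_time_bound_step:
  assumes "1/2 \<le> a" "- int m < X"
  shows "a * exit_time_bound k m (X + 1) + (1 - a) * exit_time_bound k m (X - 1) + 1 \<le> exit_time_bound k m X"
proof -
  have "exit_time_bound k m X - (a * exit_time_bound k m (X + 1) + (1 - a) * exit_time_bound k m (X - 1))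
      = 1 + (2 * a - 1) * (2 * X + 2 * int m)"
    unfolding exit_time_bound_def by (simp add: algebra_simps)
  moreover have "0 \<le> (2 * a - 1) * (2 * X + 2 * int m)" using assms by simp
  ultimately show ?thesis by linarith
qed

lemma exit_time_potential_nonneg:
  assumes "x < k" "- int m < x" "reachable \<omega> x h"
  shows "0 \<le> exit_time_potential k m h"
  using exit_time_bound_nonneg last_stop_exit_set_bounds[OF assms]
  unfolding exit_time_potential_def by (simp add: add_nonneg_nonneg)

lemma exit_time_potential_superharmonic:
  assumes \<omega>: "\<omega> \<in> Omega_plus" and "x < k" "- int m < x" and h: "reachable \<omega> x h"
  shows "step_mean \<omega> (exit_time_potential k m) h \<le> exit_time_potential k m h"
proof (cases "\<exists>z\<in>set h. exit_set k m z")
  case True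
  then show ?thesis
    using step_mean_stop_at[of h "exit_set k m" \<omega>
        "\<lambda>t. exit_time_bound k m (last t) + real (length t - 1)"]
    by (simp add: exit_time_potential_def[abs_def])
next
  case False
  let ?X = "last h" and ?p = "right_prob \<omega> h"
  have "h \<noteq> []" using reachableD[OF h] by simp
  have stop: "stop_at (exit_set k m) (h @ [y]) = h @ [y]" "stop_at (exit_set k m) h = h" for y
    using False by (simp_all add: stop_at_snoc stop_at_id)
  have "1/2 \<le> ?p" using right_prob_bounds[OF \<omega> \<open>h \<noteq> []\<close>] by simp
  then have "?p * exit_time_bound k m (?X + 1) + (1 - ?p) * exit_time_bound k m (?X - 1) + 1
      \<le> exit_time_bound k m ?X"
    using unstopped_exit_set_bounds(1)[OF assms(2-4) False] by (rule exit_time_bound_step)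
  moreover have "step_mean \<omega> (exit_time_potential k m) h
      = ?p * exit_time_bound k m (?X + 1) + (1 - ?p) * exit_time_bound k m (?X - 1) + real (length h)"
    unfolding step_mean_def exit_time_potential_def stop by (simp add: algebra_simps)
  moreover have "exit_time_potential k m h = exit_time_bound k m ?X + real (length h) - 1"
    unfolding exit_time_potential_def stop using \<open>h \<noteq> []\<close> by (simp add: of_nat_diff Suc_le_eq)
  ultimately show ?thesis by linarith
qed

text \<open>\<open>left_exit_fun \<omega> k m X L\<close> bounds the probability to leave \<open>(- m, k)\<close> at the left end,
  from \<open>X\<close> with least visited site \<open>L\<close>: the walk, having nonnegative drift, reaches the new
  site \<open>L - 1\<close> before \<open>k\<close> with probability at most \<open>(k - X) / (k - L + 1)\<close>, and from a new
  site \<open>z\<close>, where the first cookie \<open>\<omega> z 1\<close> is eaten, it goes on to \<open>z - 1\<close> before \<open>k\<close>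
  with probability at most \<open>1 - 2 \<omega> z 1 / (k - z + 1)\<close>.\<close>

definition left_exit_prod :: "env \<Rightarrow> int \<Rightarrow> nat \<Rightarrow> int \<Rightarrow> real" where
  "left_exit_prod \<omega> k m y = (\<Prod>z\<in>{- int m + 1..y}. 1 - 2 * \<omega> z 1 / real_of_int (k - z + 1))"

definition left_exit_fun :: "env \<Rightarrow> int \<Rightarrow> nat \<Rightarrow> int \<Rightarrow> int \<Rightarrow> real" where
  "left_exit_fun \<omega> k m X L = real_of_int (k - X) / real_of_int (k - L + 1) * left_exit_prod \<omega> k m (L - 1)"

definition left_exit_potential :: "env \<Rightarrow> int \<Rightarrow> nat \<Rightarrow> int list \<Rightarrow> real" where
  "left_exit_potential \<omega> k m h =
     left_exit_fun \<omega> k m (last (stop_at (exit_set k m) h)) (prev_min (stop_at (exit_set k m) h))"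

lemma left_exit_prod_nonneg:
  assumes \<omega>: "\<omega> \<in> Omega_plus" and "y < k"
  shows "0 \<le> left_exit_prod \<omega> k m y"
  unfolding left_exit_prod_def
proof (rule prod_nonneg)
  fix z assume "z \<in> {- int m + 1..y}"
  then have "2 \<le> real_of_int (k - z + 1)" using \<open>y < k\<close> by simp
  moreover have "\<omega> z 1 \<le> 1" using \<omega> unfolding Omega_plus_def by simp
  ultimately show "0 \<le> 1 - 2 * \<omega> z 1 / real_of_int (k - z + 1)"
    by (simp add: divide_le_eq_1_pos)
qed

lemma left_exit_prod_split_top:
  assumes "- int m + 1 \<le> y"
  shows "left_exit_prod \<omega> k m y = (1 - 2 * \<omega> y 1 / real_of_int (k - y + 1)) * left_exit_prod \<omega> k m (y - 1)"
proof -
  have "{- int m + 1..y} = insert y {- int m + 1..y - 1}" using assms by auto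
  then show ?thesis unfolding left_exit_prod_def by simp
qed

lemma left_exit_prod_Suc:
  assumes "- int m \<le> y"
  shows "left_exit_prod \<omega> k (Suc m) y = (1 - 2 * \<omega> (- int m) 1 / real_of_int (k + int m + 1)) * left_exit_prod \<omega> k m y"
proof -
  have "{- int (Suc m) + 1..y} = insert (- int m) {- int m + 1..y}" using assms by auto
  then show ?thesis unfolding left_exit_prod_def by simp
qed

lemma left_exit_fun_step_visited:
  assumes "1/2 \<le> a" "0 \<le> left_exit_prod \<omega> k m (L - 1)" "L \<le> k"
  shows "a * left_exit_fun \<omega> k m (X + 1) L + (1 - a) * left_exit_fun \<omega> k m (X - 1) L \<le> left_exit_fun \<omega> k m X L"
proof -
  define C where "C = left_exit_prod \<omega> k m (L - 1) / real_of_int (k - L + 1)"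
  have linear: "left_exit_fun \<omega> k m Y L = real_of_int (k - Y) * C" for Y
    unfolding left_exit_fun_def C_def by simp
  have "0 \<le> C" unfolding C_def using assms(2,3) by simp
  then have "(1 - 2 * a) * C \<le> 0" using assms(1) by (simp add: mult_nonpos_nonneg)
  moreover have "a * (real_of_int (k - (X + 1)) * C) + (1 - a) * (real_of_int (k - (X - 1)) * C)
      = real_of_int (k - X) * C + (1 - 2 * a) * C"
    by (simp add: algebra_simps)
  ultimately show ?thesis unfolding linear by linarith
qed

lemma left_exit_fun_step_new:
  assumes "- int m + 1 \<le> X" "X < k"
  shows "\<omega> X 1 * left_exit_fun \<omega> k m (X + 1) X + (1 - \<omega> X 1) * left_exit_fun \<omega> k m (X - 1) X
     = left_exit_fun \<omega> k m X (X + 1)"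
proof -
  define d where "d = real_of_int (k - X + 1)"
  define P where "P = left_exit_prod \<omega> k m (X - 1)"
  have "1 < d" unfolding d_def using assms(2) by simp
  have up: "left_exit_fun \<omega> k m (X + 1) X = (d - 2) / d * P"
    unfolding left_exit_fun_def d_def P_def by simp
  have down: "left_exit_fun \<omega> k m (X - 1) X = P"
  proof -
    have "real_of_int (k - X + 1) \<noteq> 0" using assms(2) by simp
    then show ?thesis unfolding left_exit_fun_def P_def by (simp add: field_simps)
  qed
  have now: "left_exit_fun \<omega> k m X (X + 1) = (1 - 2 * \<omega> X 1 / d) * P"
    unfolding left_exit_fun_def P_def d_def using assms by (simp add: left_exit_prod_split_top)
  show ?thesis unfolding up down now using \<open>1 < d\<close> by (simp add: field_simps)
qed

lemma left_exit_potential_nonneg: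
  assumes \<omega>: "\<omega> \<in> Omega_plus" and "x < k" "reachable \<omega> x h"
  shows "0 \<le> left_exit_potential \<omega> k m h"
proof -
  let ?t = "stop_at (exit_set k m) h"
  have "last ?t \<le> k"
    using last_stop_at_le[of x k _ \<omega> h] assms(2,3) by (simp add: exit_set_def)
  moreover have "prev_min ?t \<le> x + 1"
    using prev_min_le_hd[of ?t] reachableD[OF assms(3)] by simp
  moreover have "0 \<le> left_exit_prod \<omega> k m (prev_min ?t - 1)"
    using left_exit_prod_nonneg[OF \<omega>] calculation(2) assms(2) by simp
  ultimately show ?thesis
    unfolding left_exit_potential_def left_exit_fun_def using assms(2) by simp
qed

lemma left_exit_potential_superharmonic:
  assumes \<omega>: "\<omega> \<in> Omega_plus" and "x < k" "- int m < x" and h: "reachable \<omega> x h"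
  shows "step_mean \<omega> (left_exit_potential \<omega> k m) h \<le> left_exit_potential \<omega> k m h"
proof (cases "\<exists>z\<in>set h. exit_set k m z")
  case True
  then show ?thesis
    using step_mean_stop_at[of h "exit_set k m" \<omega> "\<lambda>t. left_exit_fun \<omega> k m (last t) (prev_min t)"]
    by (simp add: left_exit_potential_def[abs_def])
next
  case False
  let ?X = "last h" and ?L = "prev_min h"
  have "h \<noteq> []" using reachableD[OF h] by simp
  have stop: "stop_at (exit_set k m) (h @ [y]) = h @ [y]" "stop_at (exit_set k m) h = h" for y
    using False by (simp_all add: stop_at_snoc stop_at_id)
  note bounds = unstopped_exit_set_bounds[OF assms(2-4) False]
  have snoc: "left_exit_potential \<omega> k m (h @ [y]) = left_exit_fun \<omega> k m y (min ?L ?X)" for y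
    unfolding left_exit_potential_def stop using prev_min_snoc[OF \<open>h \<noteq> []\<close>] by simp
  have now: "left_exit_potential \<omega> k m h = left_exit_fun \<omega> k m ?X ?L"
    unfolding left_exit_potential_def stop ..
  show ?thesis
  proof (cases "?L \<le> ?X")
    case True
    then have "0 \<le> left_exit_prod \<omega> k m (?L - 1)"
      using left_exit_prod_nonneg[OF \<omega>] bounds(2) by simp
    with True bounds(2) show ?thesis
      unfolding step_mean_def snoc now
      using left_exit_fun_step_visited[of "right_prob \<omega> h"] right_prob_bounds[OF \<omega> \<open>h \<noteq> []\<close>] by simp
  next
    case False
    with reachable_prev_min[OF h] have "?L = ?X + 1" by simp
    then have "right_prob \<omega> h = \<omega> ?X 1"
      using count_list_last_fresh[OF \<open>h \<noteq> []\<close>] unfolding right_prob_def by simp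
    with \<open>?L = ?X + 1\<close> bounds(1,2) show ?thesis
      unfolding step_mean_def snoc now using left_exit_fun_step_new[of m ?X k \<omega>] by simp
  qed
qed

lemma left_exit_potential_Cons: "x < k \<Longrightarrow> left_exit_potential \<omega> k m [x] = left_exit_prod \<omega> k m x"
  unfolding left_exit_potential_def left_exit_fun_def by (simp add: prev_min_def exit_set_def)

lemma left_exit_potential_at_left_end:
  assumes "x < k" "- int m < x" "reachable \<omega> x h"
    and "last (stop_at (exit_set k m) h) \<le> - int m"
  shows "left_exit_potential \<omega> k m h = 1"
proof -
  let ?t = "stop_at (exit_set k m) h"
  have "- int m < prev_min ?t"
    using prev_min_stop_at_gt[OF assms(3)] assms(2) by (simp add: exit_set_def)
  moreover have "prev_min ?t - 1 \<le> last ?t"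
    by (rule reachable_prev_min[OF reachable_stop_at[OF assms(3)]])
  ultimately have "last ?t = - int m" "prev_min ?t = - int m + 1"
    using assms(4) by auto
  moreover have "0 < k + int m" using assms(1,2) by simp
  ultimately show ?thesis
    unfolding left_exit_potential_def left_exit_fun_def left_exit_prod_def by simp
qed

lemma distance_le_exit_potentials:
  assumes \<omega>: "\<omega> \<in> Omega_plus" and "x < k" "- int m < x" "0 < n"
  shows "real_of_int (k - last (stop_at (exit_set k m) (hist \<omega> x u n)))
     \<le> real_of_int (k + int m) / real n * exit_time_potential k m (hist \<omega> x u n)
       + real_of_int (k + int m) * left_exit_potential \<omega> k m (hist \<omega> x u n)"
proof -
  let ?h = "hist \<omega> x u n"
  let ?t = "stop_at (exit_set k m) ?h"
  have h: "reachable \<omega> x ?h" by (rule reachable_hist)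
  have X: "- int m \<le> last ?t" "last ?t \<le> k"
    by (rule last_stop_exit_set_bounds[OF assms(2,3) h])+
  have "0 < k + int m" using assms(2,3) by simp
  have V: "0 \<le> real_of_int (k + int m) / real n * exit_time_potential k m ?h"
    using exit_time_potential_nonneg[OF assms(2,3) h] \<open>0 < k + int m\<close> by simp
  have F: "0 \<le> real_of_int (k + int m) * left_exit_potential \<omega> k m ?h"
    using left_exit_potential_nonneg[OF \<omega> assms(2) h] \<open>0 < k + int m\<close> by simp
  show ?thesis
  proof (cases "?t = ?h")
    case True
    then have "real n \<le> exit_time_potential k m ?h"
      using exit_time_bound_nonneg[OF X] by (simp add: exit_time_potential_def)
    then have "real_of_int (k + int m) / real n * real n
        \<le> real_of_int (k + int m) / real n * exit_time_potential k m ?h"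
      using \<open>0 < k + int m\<close> by (intro mult_left_mono) auto
    then have "real_of_int (k + int m) \<le> real_of_int (k + int m) / real n * exit_time_potential k m ?h"
      using \<open>0 < n\<close> by simp
    with X F show ?thesis by linarith
  next
    case False
    then have "last ?t = k \<or> last ?t \<le> - int m"
      using last_stop_at unfolding exit_set_def by blast
    then show ?thesis
    proof
      assume "last ?t \<le> - int m"
      then have "left_exit_potential \<omega> k m ?h = 1"
        by (rule left_exit_potential_at_left_end[OF assms(2,3) h])
      with V X show ?thesis by simp
    qed (use V F in simp)
  qed
qed

lemma nn_integral_distance_exit_le:
  assumes \<omega>: "\<omega> \<in> Omega_plus" and "x < k" "- int m < x" "0 < n"
  shows "(\<integral>\<^sup>+ u. ennreal (real_of_int (k - last (stop_at (exit_set k m) (hist \<omega> x u n)))) \<partial>unif_seq)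
     \<le> ennreal (real_of_int (k + int m) / real n * exit_time_bound k m x
        + real_of_int (k + int m) * left_exit_prod \<omega> k m x)"
proof -
  define a where "a = real_of_int (k + int m) / real n"
  define b where "b = real_of_int (k + int m)"
  have "0 \<le> a" "0 \<le> b" unfolding a_def b_def using assms(2,3) by simp_all
  let ?W = "\<lambda>h. a * exit_time_potential k m h + b * left_exit_potential \<omega> k m h"
  have W_nonneg: "0 \<le> ?W h" if "reachable \<omega> x h" for h
    using exit_time_potential_nonneg[OF assms(2,3) that] left_exit_potential_nonneg[OF \<omega> assms(2) that]
      \<open>0 \<le> a\<close> \<open>0 \<le> b\<close> by simp
  have W_super: "step_mean \<omega> ?W h \<le> ?W h" if "reachable \<omega> x h" for h
    unfolding step_mean_linear
    using exit_time_potential_superharmonic[OF \<omega> assms(2,3) that]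
      left_exit_potential_superharmonic[OF \<omega> assms(2,3) that] \<open>0 \<le> a\<close> \<open>0 \<le> b\<close>
    by (intro add_mono mult_left_mono)
  have "(\<integral>\<^sup>+ u. ennreal (real_of_int (k - last (stop_at (exit_set k m) (hist \<omega> x u n)))) \<partial>unif_seq)
      \<le> (\<integral>\<^sup>+ u. ennreal (?W (hist \<omega> x u n)) \<partial>unif_seq)"
    unfolding a_def b_def
    by (intro nn_integral_mono ennreal_leI distance_le_exit_potentials[OF \<omega> assms(2-4)])
  also have "\<dots> \<le> ennreal (?W [x])"
    by (rule nn_integral_hist_superharmonic[OF \<omega> W_nonneg W_super])
  finally show ?thesis
    using assms(2,3) by (simp add: a_def b_def exit_time_potential_def left_exit_potential_Cons exit_set_def)
qed

lemma cookie_drift_partial_sums: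
  assumes "0 < liminf (\<lambda>i::nat. ereal ((1 / real i) * (\<Sum>y\<in>{- int i..0}. 2 * \<omega> y 1 - 1)))"
  obtains c N0 where "0 < c" "\<And>N. N0 \<le> N \<Longrightarrow> c * real N - c \<le> (\<Sum>j<N. 2 * \<omega> (- int j) 1 - 1)"
proof -
  obtain c i0 where "0 < c" and c: "\<And>i. i0 \<le> i \<Longrightarrow> c * real i \<le> (\<Sum>y\<in>{- int i..0}. 2 * \<omega> y 1 - 1)"
    using liminf_pos_imp_linear_lower_bound[OF assms] by blast
  have reindex: "(\<Sum>y\<in>{- int i..0}. 2 * \<omega> y 1 - 1) = (\<Sum>j<Suc i. 2 * \<omega> (- int j) 1 - 1)" for i
    by (rule sum.reindex_bij_witness[where i="\<lambda>j. - int j" and j="\<lambda>y. nat (- y)"]) auto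
  show ?thesis
  proof (rule that[OF \<open>0 < c\<close>])
    fix N assume "Suc i0 \<le> N"
    then obtain i where "N = Suc i" "i0 \<le> i" by (cases N) auto
    then show "c * real N - c \<le> (\<Sum>j<N. 2 * \<omega> (- int j) 1 - 1)"
      using c[of i] reindex[of i] by (simp add: algebra_simps)
  qed
qed

text \<open>With \<open>q m = (k + m) left_exit_prod \<omega> k m x\<close> one has
  \<open>q (m + 1) = q m (1 - (2 \<omega> (- m) 1 - 1) / (k + m))\<close>, and the hypothesis on the first cookies
  makes the sum of the subtracted terms diverge.\<close>

lemma exists_small_left_exit_prod:
  assumes \<omega>: "\<omega> \<in> Omega_plus"
    and drift: "0 < liminf (\<lambda>i::nat. ereal ((1 / real i) * (\<Sum>y\<in>{- int i..0}. 2 * \<omega> y 1 - 1)))"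
    and "x < k" "0 < e"
  shows "\<exists>m. - int m < x \<and> real_of_int (k + int m) * left_exit_prod \<omega> k m x \<le> e"
proof -
  define a where "a j = 2 * \<omega> (- int j) 1 - 1" for j
  define q where "q m = real_of_int (k + int m) * left_exit_prod \<omega> k m x" for m
  define m0 where "m0 = nat (1 - x)"
  have a: "0 \<le> a j" "a j \<le> 1" for j
    using \<omega> unfolding a_def Omega_plus_def by (auto simp: algebra_simps)
  have m0: "- int m \<le> x" "0 < k + int m" if "m0 \<le> m" for m
    using that \<open>x < k\<close> unfolding m0_def by auto
  obtain c N0 where "0 < c" and growth: "\<And>N. N0 \<le> N \<Longrightarrow> c * real N - c \<le> (\<Sum>j<N. a j)"
    using cookie_drift_partial_sums[of \<omega>, OF drift] unfolding a_def by blast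
  have "\<exists>m\<ge>m0. q m \<le> e"
  proof (rule decay_by_divergent_factors[where t="\<lambda>m. a m / (k + real m)"])
    fix m assume "m0 \<le> m"
    note m0 = m0[OF this]
    show "0 \<le> q m"
      unfolding q_def using left_exit_prod_nonneg[OF \<omega> \<open>x < k\<close>] m0 by simp
    show "0 \<le> a m / (k + real m)" using a m0 by simp
    show "q (Suc m) = q m * (1 - a m / (k + real m))"
      unfolding q_def a_def left_exit_prod_Suc[OF m0(1)] using m0(2)
      by (simp add: field_simps)
  next
    show "\<exists>J. R \<le> (\<Sum>m\<in>{m0..<J}. a m / (k + real m))" for R
      using sum_div_linear_unbounded[OF a \<open>0 < c\<close> _ growth] m0[of m0] by simp
  qed (rule \<open>0 < e\<close>)
  then obtain m where "m0 \<le> m" "q m \<le> e" by blast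
  moreover have "- int m < x" using \<open>m0 \<le> m\<close> unfolding m0_def by simp
  ultimately show ?thesis unfolding q_def by blast
qed

lemma nn_integral_distance_small:
  assumes \<omega>: "\<omega> \<in> Omega_plus"
    and drift: "0 < liminf (\<lambda>i::nat. ereal ((1 / real i) * (\<Sum>y\<in>{- int i..0}. 2 * \<omega> y 1 - 1)))"
    and "x < k" "0 < e"
  obtains n where
    "(\<integral>\<^sup>+ u. ennreal (real_of_int (k - last (stop_at (\<lambda>y. y = k) (hist \<omega> x u n)))) \<partial>unif_seq) \<le> ennreal e"
proof -
  obtain m where m: "- int m < x" "real_of_int (k + int m) * left_exit_prod \<omega> k m x \<le> e / 2"
    using exists_small_left_exit_prod[OF \<omega> drift \<open>x < k\<close>, of "e / 2"] \<open>0 < e\<close> by auto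
  define G where "G = real_of_int (k + int m) * exit_time_bound k m x"
  define n where "n = Suc (nat \<lceil>G / (e / 2)\<rceil>)"
  have "G / (e / 2) \<le> real n" unfolding n_def by linarith
  then have n: "real_of_int (k + int m) / real n * exit_time_bound k m x \<le> e / 2"
    using \<open>0 < e\<close> unfolding G_def n_def by (simp add: field_simps)
  have "(\<integral>\<^sup>+ u. ennreal (real_of_int (k - last (stop_at (\<lambda>y. y = k) (hist \<omega> x u n)))) \<partial>unif_seq)
      \<le> (\<integral>\<^sup>+ u. ennreal (real_of_int (k - last (stop_at (exit_set k m) (hist \<omega> x u n)))) \<partial>unif_seq)"
    using \<open>x < k\<close> by (intro nn_integral_distance_stop_at_mono[OF \<omega>]) (auto simp: exit_set_def)
  also have "\<dots> \<le> ennreal (real_of_int (k + int m) / real n * exit_time_bound k m x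
        + real_of_int (k + int m) * left_exit_prod \<omega> k m x)"
    by (rule nn_integral_distance_exit_le[OF \<omega> \<open>x < k\<close> m(1)]) (simp add: n_def)
  also have "\<dots> \<le> ennreal e"
    using n m(2) by (intro ennreal_leI) linarith
  finally show ?thesis by (rule that)
qed

lemma incseq_stopped_drift:
  assumes "\<omega> \<in> Omega_plus"
  shows "incseq (\<lambda>n u. ennreal (drift_sum \<omega> (stop_at B (hist \<omega> x u n))))"
  by (intro monoI le_funI ennreal_leI drift_sum_prefix_mono[OF assms] prefix_stop_at prefix_hist)

lemma D_at_hit_eq_SUP:
  assumes \<omega>: "\<omega> \<in> Omega_plus"
  shows "D_at_hit \<omega> x u k = (SUP n. ennreal (drift_sum \<omega> (stop_at (\<lambda>y. y = k) (hist \<omega> x u n))))"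
proof (cases "\<exists>n. walk \<omega> x u n = k")
  case True
  define T where "T = (LEAST j. walk \<omega> x u j = k)"
  have "walk \<omega> x u T = k" unfolding T_def using True by (rule LeastI_ex)
  then have "(\<exists>j\<le>n. walk \<omega> x u j = k) \<longleftrightarrow> T \<le> n" for n
    unfolding T_def by (auto intro: Least_le order_trans)
  then have stopped: "stop_at (\<lambda>y. y = k) (hist \<omega> x u n) = hist \<omega> x u (if T \<le> n then T else n)" for n
    unfolding stop_at_hist T_def by simp
  have "(SUP n. ennreal (drift_sum \<omega> (stop_at (\<lambda>y. y = k) (hist \<omega> x u n))))
      = ennreal (drift_sum \<omega> (hist \<omega> x u T))"
  proof (rule antisym)
    show "(SUP n. ennreal (drift_sum \<omega> (stop_at (\<lambda>y. y = k) (hist \<omega> x u n))))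
        \<le> ennreal (drift_sum \<omega> (hist \<omega> x u T))"
      unfolding stopped
      by (intro SUP_least ennreal_leI drift_sum_prefix_mono[OF \<omega>] prefix_hist) simp
    show "ennreal (drift_sum \<omega> (hist \<omega> x u T))
        \<le> (SUP n. ennreal (drift_sum \<omega> (stop_at (\<lambda>y. y = k) (hist \<omega> x u n))))"
      unfolding stopped by (rule SUP_upper2[of T]) simp_all
  qed
  moreover have "hit \<omega> x u k = enat T" unfolding hit_def T_def using True by simp
  ultimately show ?thesis unfolding D_at_hit_def by (simp add: D_eq_drift_sum)
next
  case False
  then have "hit \<omega> x u k = \<infinity>" unfolding hit_def by simp
  moreover have "stop_at (\<lambda>y. y = k) (hist \<omega> x u n) = hist \<omega> x u n" for n
    unfolding stop_at_hist using False by auto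
  ultimately show ?thesis unfolding D_at_hit_def by (simp add: D_eq_drift_sum)
qed

lemma SUP_nn_integral_stopped_drift:
  assumes \<omega>: "\<omega> \<in> Omega_plus"
    and drift: "0 < liminf (\<lambda>i::nat. ereal ((1 / real i) * (\<Sum>y\<in>{- int i..0}. 2 * \<omega> y 1 - 1)))"
    and "x \<le> k"
  shows "(SUP n. \<integral>\<^sup>+ u. ennreal (drift_sum \<omega> (stop_at (\<lambda>y. y = k) (hist \<omega> x u n))) \<partial>unif_seq)
      = ennreal (real_of_int (k - x))"
    (is "(SUP n. ?A n) = ?K")
proof (rule antisym)
  let ?C = "\<lambda>n. \<integral>\<^sup>+ u. ennreal (real_of_int (k - last (stop_at (\<lambda>y. y = k) (hist \<omega> x u n)))) \<partial>unif_seq"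
  have sum: "?A n + ?C n = ?K" for n
    by (rule nn_integral_stopped_drift_add_distance[OF \<omega> \<open>x \<le> k\<close>]) simp
  show "(SUP n. ?A n) \<le> ?K"
    by (rule SUP_least) (metis sum add_increasing2 zero_le order_refl)
  show "?K \<le> (SUP n. ?A n)"
  proof (cases "x = k")
    case False
    with \<open>x \<le> k\<close> have "x < k" by simp
    show ?thesis
    proof (rule ennreal_le_epsilon)
      fix e :: real assume "0 < e"
      then obtain n where "?C n \<le> ennreal e"
        using nn_integral_distance_small[OF \<omega> drift \<open>x < k\<close>] by blast
      have "?K = ?A n + ?C n" by (rule sum[symmetric])
      also have "\<dots> \<le> (SUP n. ?A n) + ennreal e"
        using \<open>?C n \<le> ennreal e\<close> by (intro add_mono SUP_upper) simp_all
      finally show "?K \<le> (SUP n. ?A n) + ennreal e" .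
    qed
  qed simp
qed

theorem mainTheorem2:
  fixes \<omega> :: env and x k :: int
  assumes "\<omega> \<in> Omega_plus"
    and "0 < liminf (\<lambda>i::nat. ereal ((1 / real i) * (\<Sum>y\<in>{- int i..0}. 2 * \<omega> y 1 - 1)))"
    and "x \<le> k"
  shows "(\<integral>\<^sup>+ u. D_at_hit \<omega> x u k \<partial>unif_seq) = ennreal (real_of_int (k - x))"
proof -
  have "(\<integral>\<^sup>+ u. D_at_hit \<omega> x u k \<partial>unif_seq)
      = (\<integral>\<^sup>+ u. (SUP n. ennreal (drift_sum \<omega> (stop_at (\<lambda>y. y = k) (hist \<omega> x u n)))) \<partial>unif_seq)"
    using D_at_hit_eq_SUP[OF assms(1)] by simp
  also have "\<dots> = (SUP n. \<integral>\<^sup>+ u. ennreal (drift_sum \<omega> (stop_at (\<lambda>y. y = k) (hist \<omega> x u n))) \<partial>unif_seq)"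
    by (rule nn_integral_monotone_convergence_SUP[OF incseq_stopped_drift[OF assms(1)]]) simp
  also have "\<dots> = ennreal (real_of_int (k - x))"
    by (rule SUP_nn_integral_stopped_drift[OF assms])
  finally show ?thesis .
qed

end
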